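(* Let $k\in\mathbb N$, $\alpha,\beta\in\mathbb R$, $0<p,q\le\infty$, and $0<\delta\le1/(2k)$. Let $J_i=[k\delta i,k\delta(i+1/2)]$ and define \[ f_\delta(x)=\begin{cases}(-1)^i, & x\in J_i,\ 0\le i\le\lfloor1/(2k\delta)\rfloor,\\ 0,&\text{otherwise}.\end{cases} \] Then $\|w_{\alpha,\beta}f_\delta\|_p\sim1$ and $\Omega_\varphi^k(f_\delta,\delta)_{w_{\alpha,\beta},q}\ge c>0$, with constants independent of $\delta$.
   Context: For $x\in[-1,1]$, $\varphi(x)=\sqrt{1-x^2}$, $w_{\alpha,\beta}(x)=(1+x)^\alpha(1-x)^\beta$; $\|\cdot\|_p$ is the $L_p[-1,1]$ (quasi)norm, $\|g\|_{L_q(S)}$ the $L_q$ (quasi)norm over $S$. $\Delta_h^k(f,x)=\sum_{i=0}^k\binom ki(-1)^{k-i}f(x-kh/2+ih)$ if $x\pm kh/2\in[-1,1]$, else $0$. For a weight $w$, $\Omega_\varphi^k(f,\delta)_{w,q}=\sup_{0<h\le\delta}\|w(x)\Delta^k_{h\varphi(x)}(f,x)\|_{L_q[-1+2k^2h^2,1-2k^2h^2]}$. $F\sim G$ means $c_1F\le G\le c_2F$ with positive constants independent of $\delta$. *)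

theory Defs
  imports "HOL-Analysis.Analysis" "HOL-Probability.Essential_Supremum"
begin

definition phi :: "real \<Rightarrow> real" where
  "phi x = sqrt (1 - x\<^sup>2)"

definition wab :: "real \<Rightarrow> real \<Rightarrow> real \<Rightarrow> real" where
  "wab \<alpha> \<beta> x = (1 + x) powr \<alpha> * (1 - x) powr \<beta>"

definition Lnorm :: "real set \<Rightarrow> ennreal \<Rightarrow> (real \<Rightarrow> real) \<Rightarrow> ennreal" where
  "Lnorm S p g =
     (if p = \<infinity> then esssup (lebesgue_on S) (\<lambda>x. ennreal \<bar>g x\<bar>)
      else (let I = (\<integral>\<^sup>+ x \<in> S. ennreal (\<bar>g x\<bar> powr enn2real p) \<partial>lebesgue)
            in if I = \<infinity> then \<infinity> else ennreal (enn2real I powr (1 / enn2real p))))"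

definition kdiff :: "nat \<Rightarrow> real \<Rightarrow> (real \<Rightarrow> real) \<Rightarrow> real \<Rightarrow> real" where
  "kdiff k h f x =
     (if -1 \<le> x - real k * h / 2 \<and> x + real k * h / 2 \<le> 1
      then (\<Sum>i=0..k. real (k choose i) * (-1) ^ (k - i) * f (x - real k * h / 2 + real i * h))
      else 0)"

definition Omega_phi :: "nat \<Rightarrow> (real \<Rightarrow> real) \<Rightarrow> real \<Rightarrow> (real \<Rightarrow> real) \<Rightarrow> ennreal \<Rightarrow> ennreal" where
  "Omega_phi k f \<delta> w q =
     (SUP h\<in>{0<..\<delta>}. Lnorm {-1 + 2 * (real k)\<^sup>2 * h\<^sup>2 .. 1 - 2 * (real k)\<^sup>2 * h\<^sup>2} q
                         (\<lambda>x. w x * kdiff k (h * phi x) f x))"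

definition Jint :: "nat \<Rightarrow> real \<Rightarrow> nat \<Rightarrow> real set" where
  "Jint k \<delta> i = {real k * \<delta> * real i .. real k * \<delta> * (real i + 1/2)}"

definition fdelta :: "nat \<Rightarrow> real \<Rightarrow> real \<Rightarrow> real" where
  "fdelta k \<delta> x =
     (if \<exists>i. i \<le> nat \<lfloor>1 / (2 * real k * \<delta>)\<rfloor> \<and> x \<in> Jint k \<delta> i
      then (-1) ^ (SOME i. i \<le> nat \<lfloor>1 / (2 * real k * \<delta>)\<rfloor> \<and> x \<in> Jint k \<delta> i)
      else 0)"

end

theory Submission
  imports Defs
begin

text \<open>
  Put K = k\<delta>. Then f_\<delta> equals (-1)^i on J_i = [Ki, K(i + 1/2)] \<subseteq> [0, 3/4] and vanishes
  elsewhere, and on [0, 3/4] the weight w_\<alpha>\<beta> lies between exp(-2(|\<alpha>| + |\<beta>|)) and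
  exp(2(|\<alpha>| + |\<beta>|)). This bounds the weighted norm of f_\<delta> from above, and from below on the
  union of the first eighths of the blocks J_i, a set of measure greater than 1/16.

  For the modulus take h = \<delta>/2. For x in the first eighth of J_i we have \<phi>(x) > 1/2, so the
  nodes of the k-th difference with step h\<phi>(x) run from the gap before J_i into J_i: the
  difference sees a single jump of f_\<delta>. Since the full alternating binomial sum vanishes, it
  equals, up to sign, a partial sum of (-1)^j C(k, j) over j < m, which is \<plusminus>C(k - 1, m - 1) and
  so has absolute value at least 1.
\<close>

lemma Lnorm_ge_of_integral_ge:
  assumes "p \<noteq> \<infinity>" and "0 \<le> a"
    and "ennreal a \<le> (\<integral>\<^sup>+ x \<in> S. ennreal (\<bar>g x\<bar> powr enn2real p) \<partial>lebesgue)"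
  shows "ennreal (a powr (1 / enn2real p)) \<le> Lnorm S p g"
proof -
  define I where "I = (\<integral>\<^sup>+ x \<in> S. ennreal (\<bar>g x\<bar> powr enn2real p) \<partial>lebesgue)"
  show ?thesis
  proof (cases "I = \<infinity>")
    case False
    have "enn2real (ennreal a) \<le> enn2real I"
      using assms(3) False by (intro enn2real_mono) (auto simp: I_def less_top)
    then have "a \<le> enn2real I"
      using assms(2) by simp
    then have "a powr (1 / enn2real p) \<le> enn2real I powr (1 / enn2real p)"
      using assms(2) by (intro powr_mono2) auto
    then show ?thesis
      using assms(1) False by (simp add: Lnorm_def I_def[symmetric])
  qed (use assms(1) in \<open>simp add: Lnorm_def I_def[symmetric]\<close>)
qed

lemma Lnorm_le_of_integral_le:
  assumes "p \<noteq> \<infinity>" and "0 \<le> a"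
    and "(\<integral>\<^sup>+ x \<in> S. ennreal (\<bar>g x\<bar> powr enn2real p) \<partial>lebesgue) \<le> ennreal a"
  shows "Lnorm S p g \<le> ennreal (a powr (1 / enn2real p))"
proof -
  define I where "I = (\<integral>\<^sup>+ x \<in> S. ennreal (\<bar>g x\<bar> powr enn2real p) \<partial>lebesgue)"
  have "I \<noteq> \<infinity>"
    using assms(3) by (auto simp: I_def top_unique)
  moreover have "enn2real I \<le> enn2real (ennreal a)"
    using assms(3) by (intro enn2real_mono) (auto simp: I_def)
  then have "enn2real I \<le> a"
    using assms(2) by simp
  then have "enn2real I powr (1 / enn2real p) \<le> a powr (1 / enn2real p)"
    by (intro powr_mono2) auto
  ultimately show ?thesis
    using assms(1) by (simp add: Lnorm_def I_def[symmetric])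
qed

definition const_Lnorm :: "ennreal \<Rightarrow> real \<Rightarrow> real \<Rightarrow> real" where
  "const_Lnorm p c m = (if p = \<infinity> then c else (c powr enn2real p * m) powr (1 / enn2real p))"

lemma const_Lnorm_pos: "0 < c \<Longrightarrow> 0 < m \<Longrightarrow> 0 < const_Lnorm p c m"
  by (simp add: const_Lnorm_def)

lemma Lnorm_ge_const_Lnorm:
  assumes c: "0 \<le> c" and m: "0 < m"
    and S: "S \<in> sets lebesgue" and E: "E \<in> sets lebesgue" "E \<subseteq> S"
    and measure_E: "ennreal m \<le> emeasure lebesgue E"
    and g_ge: "\<And>x. x \<in> E \<Longrightarrow> c \<le> \<bar>g x\<bar>"
  shows "ennreal (const_Lnorm p c m) \<le> Lnorm S p g"
proof (cases "p = \<infinity>")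
  case True
  show ?thesis
  proof (rule ccontr)
    assume "\<not> ?thesis"
    then have sup_lt: "esssup (lebesgue_on S) (\<lambda>x. ennreal \<bar>g x\<bar>) < ennreal c"
      using True by (simp add: Lnorm_def const_Lnorm_def)
    have "AE x in lebesgue_on S. x \<notin> E"
      using esssup_AE[of "\<lambda>x. ennreal \<bar>g x\<bar>" "lebesgue_on S"]
    proof (rule AE_mp, intro AE_I2 impI)
      fix x assume "ennreal \<bar>g x\<bar> \<le> esssup (lebesgue_on S) (\<lambda>x. ennreal \<bar>g x\<bar>)"
      with sup_lt have "ennreal \<bar>g x\<bar> < ennreal c"
        by order
      then have "\<bar>g x\<bar> < c"
        by (simp add: ennreal_less_iff)
      then show "x \<notin> E"
        using g_ge by force
    qed
    moreover have "E \<in> sets (lebesgue_on S)"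
      using S E by (simp add: sets_restrict_space_iff)
    ultimately have "emeasure (lebesgue_on S) E = 0"
      using E(2) by (subst (asm) AE_iff_measurable) (auto simp: space_restrict_space)
    moreover have "emeasure (lebesgue_on S) E = emeasure lebesgue E"
      using S E by (intro emeasure_restrict_space) auto
    ultimately show False
      using m measure_E by (simp add: ennreal_le_iff2)
  qed
next
  case p_finite: False
  define r where "r = enn2real p"
  have "ennreal (c powr r * m) = ennreal (c powr r) * ennreal m"
    using m by (simp add: ennreal_mult)
  also have "\<dots> \<le> ennreal (c powr r) * emeasure lebesgue E"
    using measure_E by (rule mult_left_mono) simp
  also have "\<dots> = (\<integral>\<^sup>+ x. ennreal (c powr r) * indicator E x \<partial>lebesgue)"
    using E(1) by (simp add: nn_integral_cmult_indicator)
  also have "\<dots> \<le> (\<integral>\<^sup>+ x \<in> S. ennreal (\<bar>g x\<bar> powr r) \<partial>lebesgue)"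
  proof (rule nn_integral_mono)
    fix x
    show "ennreal (c powr r) * indicator E x \<le> ennreal (\<bar>g x\<bar> powr r) * indicator S x"
    proof (cases "x \<in> E")
      case True
      then have "c powr r \<le> \<bar>g x\<bar> powr r"
        using c g_ge by (auto intro: powr_mono2 simp: r_def)
      then show ?thesis
        using True E(2) by (auto simp: indicator_def)
    qed simp
  qed
  finally show ?thesis
    using Lnorm_ge_of_integral_ge[OF p_finite] m p_finite by (simp add: const_Lnorm_def r_def)
qed

lemma Lnorm_le_const_Lnorm:
  assumes c: "0 \<le> c" and m: "0 \<le> m"
    and S: "S \<in> sets lebesgue" and measure_S: "emeasure lebesgue S \<le> ennreal m"
    and g_meas: "g \<in> borel_measurable lebesgue" and g_le: "\<And>x. x \<in> S \<Longrightarrow> \<bar>g x\<bar> \<le> c"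
  shows "Lnorm S p g \<le> ennreal (const_Lnorm p c m)"
proof (cases "p = \<infinity>")
  case True
  have "(\<lambda>x. ennreal \<bar>g x\<bar>) \<in> borel_measurable (lebesgue_on S)"
    using g_meas by (intro measurable_restrict_space1) measurable
  then have "esssup (lebesgue_on S) (\<lambda>x. ennreal \<bar>g x\<bar>) \<le> ennreal c"
    by (rule esssup_I) (auto intro!: AE_I2 ennreal_leI g_le simp: space_restrict_space)
  then show ?thesis
    using True by (simp add: Lnorm_def const_Lnorm_def)
next
  case p_finite: False
  define r where "r = enn2real p"
  have "(\<integral>\<^sup>+ x \<in> S. ennreal (\<bar>g x\<bar> powr r) \<partial>lebesgue) \<le> (\<integral>\<^sup>+ x. ennreal (c powr r) * indicator S x \<partial>lebesgue)"
  proof (rule nn_integral_mono)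
    fix x
    have "x \<in> S \<Longrightarrow> \<bar>g x\<bar> powr r \<le> c powr r"
      using g_le by (intro powr_mono2) (auto simp: r_def)
    then show "ennreal (\<bar>g x\<bar> powr r) * indicator S x \<le> ennreal (c powr r) * indicator S x"
      by (auto simp: indicator_def)
  qed
  also have "\<dots> = ennreal (c powr r) * emeasure lebesgue S"
    using S by (simp add: nn_integral_cmult_indicator)
  also have "\<dots> \<le> ennreal (c powr r) * ennreal m"
    using measure_S by (rule mult_left_mono) simp
  also have "\<dots> = ennreal (c powr r * m)"
    using m by (simp add: ennreal_mult)
  finally show ?thesis
    using Lnorm_le_of_integral_le[OF p_finite] m p_finite by (simp add: const_Lnorm_def r_def)
qed

lemma minus_one_power_diff: "j \<le> k \<Longrightarrow> (-1::real) ^ (k - j) = (-1) ^ k * (-1) ^ j"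
  by (cases "even j") (simp_all add: power_diff)

lemma alternating_binomial_sum:
  assumes "1 \<le> k"
  shows "(\<Sum>j\<le>k. real (k choose j) * (-1) ^ (k - j)) = 0"
proof -
  have "(\<Sum>j\<le>k. real (k choose j) * (-1) ^ (k - j)) = (-1) ^ k * (\<Sum>j\<le>k. (-1) ^ j * real (k choose j))"
    by (simp add: sum_distrib_left minus_one_power_diff mult_ac)
  also have "\<dots> = 0"
    using assms by (simp add: choose_alternating_sum)
  finally show ?thesis .
qed

lemma abs_alternating_binomial_partial_sum:
  assumes "1 \<le> m" and "m \<le> k"
  shows "\<bar>\<Sum>j<m. real (k choose j) * (-1) ^ (k - j)\<bar> = real ((k - 1) choose (m - 1))"
proof -
  have "{..<m} = {..m - 1}"
    using assms(1) by auto
  then have "(\<Sum>j<m. real (k choose j) * (-1) ^ (k - j))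
      = (-1) ^ k * (\<Sum>j\<le>m - 1. (real k gchoose j) * (-1) ^ j)"
    using assms by (auto simp: sum_distrib_left minus_one_power_diff mult_ac binomial_gbinomial
        intro!: sum.cong)
  also have "\<dots> = (-1) ^ k * ((-1) ^ (m - 1) * ((real k - 1) gchoose (m - 1)))"
    by (simp add: gbinomial_sum_lower_neg)
  also have "(real k - 1) gchoose (m - 1) = real ((k - 1) choose (m - 1))"
    using assms by (simp add: binomial_gbinomial of_nat_diff)
  finally show ?thesis
    by (simp add: abs_mult power_abs)
qed

lemma kdiff_eq_of_jump:
  fixes f :: "real \<Rightarrow> real"
  assumes "x - real k * t / 2 < a" and "a \<le> x + real k * t / 2"
    and "-1 \<le> x - real k * t / 2" and "x + real k * t / 2 \<le> 1"
    and "\<And>y. a \<le> y \<Longrightarrow> y \<le> x + real k * t / 2 \<Longrightarrow> f y = s"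
    and "\<And>y. x - real k * t / 2 \<le> y \<Longrightarrow> y < a \<Longrightarrow> f y = 0"
  obtains m where "1 \<le> m" and "m \<le> k"
    and "kdiff k t f x = - s * (\<Sum>j<m. real (k choose j) * (-1) ^ (k - j))"
proof -
  define y where "y j = x - real k * t / 2 + real j * t" for j :: nat
  define c where "c j = real (k choose j) * (-1) ^ (k - j)" for j
  have "0 < real k * t"
    using assms(1,2) by linarith
  then have t: "0 < t"
    by (simp add: zero_less_mult_iff)
  have y_mono: "y i \<le> y j" if "i \<le> j" for i j
    using that t unfolding y_def by (simp add: mult_right_mono)
  define m where "m = (LEAST j. a \<le> y j)"
  have a_le_yk: "a \<le> y k"
    using assms(2) unfolding y_def by (simp add: algebra_simps)
  have a_le_ym: "a \<le> y m"
    unfolding m_def using a_le_yk by (rule LeastI)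
  have m_le_k: "m \<le> k"
    unfolding m_def using a_le_yk by (rule Least_le)
  have yj_lt_a: "y j < a" if "j < m" for j
    using not_less_Least[of j "\<lambda>j. a \<le> y j"] that unfolding m_def by simp
  have m_ge_1: "1 \<le> m"
    using yj_lt_a[of 0] assms(1) a_le_ym by (cases m) (auto simp: y_def)
  have f_y: "f (y j) = (if m \<le> j then s else 0)" if "j \<le> k" for j
  proof -
    have "x - real k * t / 2 \<le> y j" "y j \<le> x + real k * t / 2"
      using y_mono[of 0 j] y_mono[OF that] by (simp_all add: y_def algebra_simps)
    then show ?thesis
      using assms(5,6) yj_lt_a[of j] a_le_ym y_mono[of m j] by auto
  qed
  have "kdiff k t f x = (\<Sum>j\<le>k. c j * f (y j))"
    using assms(3,4) unfolding kdiff_def c_def y_def by (simp add: atLeast0AtMost)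
  also have "\<dots> = (\<Sum>j\<le>k. s * c j) - (\<Sum>j\<le>k. if j < m then s * c j else 0)"
    using f_y by (auto simp: sum_subtractf[symmetric] intro!: sum.cong)
  also have "(\<Sum>j\<le>k. s * c j) = 0"
    using alternating_binomial_sum[of k] m_ge_1 m_le_k by (simp add: c_def sum_distrib_left[symmetric])
  also have "(\<Sum>j\<le>k. if j < m then s * c j else 0) = (\<Sum>j\<in>{..k} \<inter> {..<m}. s * c j)"
    by (simp add: sum.inter_restrict)
  also have "{..k} \<inter> {..<m} = {..<m}"
    using m_le_k by auto
  finally have "kdiff k t f x = - s * (\<Sum>j<m. c j)"
    by (simp add: sum_distrib_left sum_negf)
  then show ?thesis
    using that m_ge_1 m_le_k unfolding c_def by blast
qed

lemma abs_kdiff_ge_of_jump: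
  fixes f :: "real \<Rightarrow> real"
  assumes "x - real k * t / 2 < a" and "a \<le> x + real k * t / 2"
    and "-1 \<le> x - real k * t / 2" and "x + real k * t / 2 \<le> 1"
    and "\<And>y. a \<le> y \<Longrightarrow> y \<le> x + real k * t / 2 \<Longrightarrow> f y = s"
    and "\<And>y. x - real k * t / 2 \<le> y \<Longrightarrow> y < a \<Longrightarrow> f y = 0"
  shows "\<bar>s\<bar> \<le> \<bar>kdiff k t f x\<bar>"
proof -
  obtain m where m: "1 \<le> m" "m \<le> k"
    and kdiff_eq: "kdiff k t f x = - s * (\<Sum>j<m. real (k choose j) * (-1) ^ (k - j))"
    using kdiff_eq_of_jump[OF assms] .
  have "1 \<le> (k - 1) choose (m - 1)"
    using m by (simp add: Suc_leI zero_less_binomial)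
  then have "\<bar>s\<bar> \<le> \<bar>s\<bar> * real ((k - 1) choose (m - 1))"
    by (simp add: mult_le_cancel_left1)
  also have "\<dots> = \<bar>kdiff k t f x\<bar>"
    unfolding kdiff_eq using abs_alternating_binomial_partial_sum[OF m] by (simp add: abs_mult)
  finally show ?thesis .
qed

lemma powr_between_exp:
  fixes y a L :: real
  assumes "0 < y" and "\<bar>ln y\<bar> \<le> L"
  shows "exp (- L * \<bar>a\<bar>) \<le> y powr a" and "y powr a \<le> exp (L * \<bar>a\<bar>)"
proof -
  have "\<bar>a * ln y\<bar> = \<bar>a\<bar> * \<bar>ln y\<bar>"
    by (rule abs_mult)
  also have "\<dots> \<le> L * \<bar>a\<bar>"
    using assms(2) by (metis abs_ge_zero mult.commute mult_left_mono)
  finally have "\<bar>a * ln y\<bar> \<le> L * \<bar>a\<bar>" .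
  then show "exp (- L * \<bar>a\<bar>) \<le> y powr a" and "y powr a \<le> exp (L * \<bar>a\<bar>)"
    using assms(1) by (simp_all add: powr_def)
qed

lemma wab_between_exp:
  assumes "0 \<le> x" and "x \<le> 3/4"
  shows "exp (-2 * (\<bar>\<alpha>\<bar> + \<bar>\<beta>\<bar>)) \<le> wab \<alpha> \<beta> x" and "wab \<alpha> \<beta> x \<le> exp (2 * (\<bar>\<alpha>\<bar> + \<bar>\<beta>\<bar>))"
proof -
  have "ln (1 + x) \<le> ln 2"
    using assms by (subst ln_le_cancel_iff) auto
  moreover have "- 2 * ln 2 \<le> ln (1 - x)"
  proof -
    have "ln (1 / 4) \<le> ln (1 - x)"
      using assms by (subst ln_le_cancel_iff) auto
    moreover have "ln (1 / 4 :: real) = - 2 * ln 2"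
      by (simp add: ln_div ln_realpow[of 2 2, simplified])
    ultimately show ?thesis
      by simp
  qed
  moreover have "0 \<le> ln (1 + x)" and "ln (1 - x) \<le> 0"
    using assms by simp_all
  ultimately have "\<bar>ln (1 + x)\<bar> \<le> 2" and "\<bar>ln (1 - x)\<bar> \<le> 2"
    using ln_2_less_1 by linarith+
  then have A: "exp (-2 * \<bar>\<alpha>\<bar>) \<le> (1 + x) powr \<alpha>" "(1 + x) powr \<alpha> \<le> exp (2 * \<bar>\<alpha>\<bar>)"
    and B: "exp (-2 * \<bar>\<beta>\<bar>) \<le> (1 - x) powr \<beta>" "(1 - x) powr \<beta> \<le> exp (2 * \<bar>\<beta>\<bar>)"
    using assms powr_between_exp[of "1 + x" 2] powr_between_exp[of "1 - x" 2] by auto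
  have "exp (-2 * (\<bar>\<alpha>\<bar> + \<bar>\<beta>\<bar>)) = exp (-2 * \<bar>\<alpha>\<bar>) * exp (-2 * \<bar>\<beta>\<bar>)"
    by (simp flip: exp_add add: algebra_simps)
  also have "\<dots> \<le> wab \<alpha> \<beta> x"
    unfolding wab_def using A B by (intro mult_mono) auto
  finally show "exp (-2 * (\<bar>\<alpha>\<bar> + \<bar>\<beta>\<bar>)) \<le> wab \<alpha> \<beta> x" .
  have "wab \<alpha> \<beta> x \<le> exp (2 * \<bar>\<alpha>\<bar>) * exp (2 * \<bar>\<beta>\<bar>)"
    unfolding wab_def using A B by (intro mult_mono) auto
  also have "\<dots> = exp (2 * (\<bar>\<alpha>\<bar> + \<bar>\<beta>\<bar>))"
    by (simp flip: exp_add add: algebra_simps)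
  finally show "wab \<alpha> \<beta> x \<le> exp (2 * (\<bar>\<alpha>\<bar> + \<bar>\<beta>\<bar>))" .
qed

lemma wab_nonneg: "0 \<le> wab \<alpha> \<beta> x"
  by (simp add: wab_def)

lemma phi_le_1: "phi x \<le> 1"
  by (simp add: phi_def)

lemma phi_gt_half:
  assumes "x\<^sup>2 < 3/4"
  shows "1/2 < phi x"
proof -
  have "sqrt (1/4) < sqrt (1 - x\<^sup>2)"
    using assms by simp
  then show ?thesis
    by (simp add: phi_def real_sqrt_divide)
qed

definition last_block :: "nat \<Rightarrow> real \<Rightarrow> nat" where
  "last_block k \<delta> = nat \<lfloor>1 / (2 * real k * \<delta>)\<rfloor>"

lemma Jint_disjoint:
  assumes "0 < real k * \<delta>" and "x \<in> Jint k \<delta> i" and "x \<in> Jint k \<delta> j"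
  shows "i = j"
proof -
  have "real k * \<delta> * real i \<le> real k * \<delta> * (real j + 1/2)"
    and "real k * \<delta> * real j \<le> real k * \<delta> * (real i + 1/2)"
    using assms(2,3) by (auto simp: Jint_def)
  then have "real i \<le> real j + 1/2" and "real j \<le> real i + 1/2"
    using assms(1) by (simp_all only: mult_le_cancel_left_pos)
  then show ?thesis
    by linarith
qed

lemma fdelta_eq_on_Jint:
  assumes "0 < real k * \<delta>" and "i \<le> last_block k \<delta>" and "x \<in> Jint k \<delta> i"
  shows "fdelta k \<delta> x = (-1) ^ i"
proof -
  let ?P = "\<lambda>i. i \<le> last_block k \<delta> \<and> x \<in> Jint k \<delta> i"
  have "?P (SOME i. ?P i)"
    using assms(2,3) by (intro someI) blast
  then have "(SOME i. ?P i) = i"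
    using Jint_disjoint[OF assms(1,3)] by blast
  then show ?thesis
    using assms(2,3) unfolding fdelta_def last_block_def[symmetric] by auto
qed

lemma fdelta_eq_0:
  assumes "\<And>i. i \<le> last_block k \<delta> \<Longrightarrow> x \<notin> Jint k \<delta> i"
  shows "fdelta k \<delta> x = 0"
  using assms unfolding fdelta_def last_block_def by auto

lemma fdelta_eq_sum_indicator:
  assumes "0 < real k * \<delta>"
  shows "fdelta k \<delta> x = (\<Sum>i\<le>last_block k \<delta>. (-1) ^ i * indicator (Jint k \<delta> i) x)"
proof (cases "\<exists>i\<le>last_block k \<delta>. x \<in> Jint k \<delta> i")
  case True
  then obtain i where i: "i \<le> last_block k \<delta>" "x \<in> Jint k \<delta> i"
    by blast
  have "(-1) ^ j * indicator (Jint k \<delta> j) x = (0::real)" if "j \<noteq> i" for j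
    using Jint_disjoint[OF assms i(2), of j] that by (auto simp: indicator_def)
  then have "(\<Sum>j\<le>last_block k \<delta>. (-1) ^ j * indicator (Jint k \<delta> j) x)
      = (\<Sum>j\<in>{i}. (-1) ^ j * indicator (Jint k \<delta> j) x :: real)"
    using i by (intro sum.mono_neutral_right) auto
  then show ?thesis
    using i fdelta_eq_on_Jint[OF assms i] by simp
next
  case False
  then have "fdelta k \<delta> x = 0" and "(\<Sum>i\<le>last_block k \<delta>. (-1) ^ i * indicator (Jint k \<delta> i) x) = (0::real)"
    by (auto intro: fdelta_eq_0 sum.neutral)
  then show ?thesis
    by simp
qed

lemma borel_measurable_fdelta:
  assumes "0 < real k * \<delta>"
  shows "fdelta k \<delta> \<in> borel_measurable borel"
proof -
  have sum_form: "fdelta k \<delta> = (\<lambda>x. \<Sum>i\<le>last_block k \<delta>. (-1) ^ i * indicator (Jint k \<delta> i) x)"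
    using assms by (intro ext fdelta_eq_sum_indicator)
  show ?thesis
    unfolding sum_form Jint_def by measurable
qed

definition Jhead :: "nat \<Rightarrow> real \<Rightarrow> nat \<Rightarrow> real set" where
  "Jhead k \<delta> i = {real k * \<delta> * real i .. real k * \<delta> * (real i + 1/8)}"

definition Jheads :: "nat \<Rightarrow> real \<Rightarrow> real set" where
  "Jheads k \<delta> = (\<Union>i\<le>last_block k \<delta>. Jhead k \<delta> i)"

lemma Jhead_subset_Jint:
  assumes "0 < real k * \<delta>"
  shows "Jhead k \<delta> i \<subseteq> Jint k \<delta> i"
proof -
  have "real k * \<delta> * (real i + 1/8) \<le> real k * \<delta> * (real i + 1/2)"
    using assms by (intro mult_left_mono) auto
  then show ?thesis
    by (auto simp: Jhead_def Jint_def)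
qed

lemma Jheads_in_sets: "Jheads k \<delta> \<in> sets lebesgue"
  by (auto simp: Jheads_def Jhead_def)

context
  fixes k :: nat and \<delta> :: real
  assumes k_ge_1: "1 \<le> k" and \<delta>_pos: "0 < \<delta>" and \<delta>_le: "\<delta> \<le> 1 / (2 * real k)"
begin

lemma block_length_pos: "0 < real k * \<delta>"
  using k_ge_1 \<delta>_pos by simp

lemma block_length_le_half: "real k * \<delta> \<le> 1/2"
  using mult_left_mono[OF \<delta>_le, of "real k"] k_ge_1 by simp

lemma last_block_bounds:
  shows "real k * \<delta> * real (last_block k \<delta>) \<le> 1/2"
    and "1/2 < real k * \<delta> * (real (last_block k \<delta>) + 1)"
proof -
  define K where "K = real k * \<delta>"
  have K: "0 < K"
    unfolding K_def by (rule block_length_pos)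
  have N: "real (last_block k \<delta>) = of_int \<lfloor>1 / (2 * K)\<rfloor>"
    using K by (simp add: last_block_def K_def mult.assoc)
  have "real (last_block k \<delta>) \<le> 1 / (2 * K)" and "1 / (2 * K) < real (last_block k \<delta>) + 1"
    unfolding N by linarith+
  then show "real k * \<delta> * real (last_block k \<delta>) \<le> 1/2"
    and "1/2 < real k * \<delta> * (real (last_block k \<delta>) + 1)"
    using K unfolding K_def[symmetric] by (simp_all add: field_simps)
qed

lemma abs_fdelta_le_indicator: "\<bar>fdelta k \<delta> x\<bar> \<le> indicator {0..3/4} x"
proof (cases "\<exists>i\<le>last_block k \<delta>. x \<in> Jint k \<delta> i")
  case True
  then obtain i where i: "i \<le> last_block k \<delta>" "x \<in> Jint k \<delta> i"
    by blast
  have "real k * \<delta> * real i \<le> real k * \<delta> * real (last_block k \<delta>)"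
    using i(1) block_length_pos by (intro mult_left_mono) auto
  moreover have "0 \<le> real k * \<delta> * real i"
    using block_length_pos by simp
  ultimately have "x \<in> {0..3/4}"
    using i(2) block_length_le_half last_block_bounds(1) by (auto simp: Jint_def algebra_simps)
  then show ?thesis
    using fdelta_eq_on_Jint[OF block_length_pos i] by simp
next
  case False
  then have "fdelta k \<delta> x = 0"
    by (auto intro: fdelta_eq_0)
  then show ?thesis
    by simp
qed

lemma Jheads_subset: "Jheads k \<delta> \<subseteq> {0..9/16}"
proof
  fix x assume "x \<in> Jheads k \<delta>"
  then obtain i where i: "i \<le> last_block k \<delta>" "x \<in> Jhead k \<delta> i"
    by (auto simp: Jheads_def)
  have "real k * \<delta> * real i \<le> real k * \<delta> * real (last_block k \<delta>)"
    using i(1) block_length_pos by (intro mult_left_mono) auto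
  moreover have "0 \<le> real k * \<delta> * real i"
    using block_length_pos by simp
  ultimately show "x \<in> {0..9/16}"
    using i(2) block_length_le_half last_block_bounds(1) by (auto simp: Jhead_def algebra_simps)
qed

lemma emeasure_Jheads_ge: "ennreal (1/16) \<le> emeasure lebesgue (Jheads k \<delta>)"
proof -
  define N where "N = last_block k \<delta>"
  have "disjoint_family_on (Jhead k \<delta>) {..N}"
    unfolding disjoint_family_on_def
  proof (intro ballI impI, rule ccontr)
    fix i j assume "i \<noteq> j" and "Jhead k \<delta> i \<inter> Jhead k \<delta> j \<noteq> {}"
    then obtain x where "x \<in> Jint k \<delta> i" "x \<in> Jint k \<delta> j"
      using Jhead_subset_Jint[OF block_length_pos] by blast
    then show False
      using Jint_disjoint[OF block_length_pos] \<open>i \<noteq> j\<close> by blast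
  qed
  then have "emeasure lebesgue (Jheads k \<delta>) = (\<Sum>i\<le>N. emeasure lebesgue (Jhead k \<delta> i))"
    unfolding Jheads_def N_def[symmetric]
    by (intro sum_emeasure[symmetric]) (auto simp: Jhead_def[abs_def])
  also have "\<dots> = (\<Sum>i\<le>N. ennreal (real k * \<delta> / 8))"
    using block_length_pos by (intro sum.cong) (auto simp: Jhead_def algebra_simps)
  also have "\<dots> = ennreal (\<Sum>i\<le>N. real k * \<delta> / 8)"
    using block_length_pos by (intro sum_ennreal) auto
  also have "(\<Sum>i\<le>N. real k * \<delta> / 8) = (real N + 1) * (real k * \<delta> / 8)"
    by simp
  finally show ?thesis
    using last_block_bounds(2) unfolding N_def by (simp add: algebra_simps)
qed

lemma abs_fdelta_on_Jheads:
  assumes "x \<in> Jheads k \<delta>"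
  shows "\<bar>fdelta k \<delta> x\<bar> = 1"
proof -
  obtain i where "i \<le> last_block k \<delta>" and "x \<in> Jint k \<delta> i"
    using assms Jhead_subset_Jint[OF block_length_pos] by (auto simp: Jheads_def)
  then show ?thesis
    using fdelta_eq_on_Jint[OF block_length_pos] by simp
qed

lemma abs_kdiff_fdelta_ge_1:
  assumes "x \<in> Jheads k \<delta>" and "real k * \<delta> / 4 < real k * t" and "real k * t \<le> real k * \<delta> / 2"
  shows "1 \<le> \<bar>kdiff k t (fdelta k \<delta>) x\<bar>"
proof -
  define K where "K = real k * \<delta>"
  have K: "0 < K" "K \<le> 1/2"
    using block_length_pos block_length_le_half by (simp_all add: K_def)
  have kt: "K / 4 < real k * t" "real k * t \<le> K / 2"
    using assms(2,3) by (simp_all add: K_def)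
  obtain i where i: "i \<le> last_block k \<delta>" "K * real i \<le> x" "x \<le> K * real i + K / 8"
    using assms(1) by (auto simp: Jheads_def Jhead_def K_def algebra_simps)
  have x: "0 \<le> x" "x \<le> 9/16"
    using assms(1) Jheads_subset by auto
  have Jint_eq: "Jint k \<delta> j = {K * real j .. K * real j + K / 2}" for j
    by (simp add: Jint_def K_def algebra_simps)
  have "\<bar>(-1::real) ^ i\<bar> \<le> \<bar>kdiff k t (fdelta k \<delta>) x\<bar>"
  proof (rule abs_kdiff_ge_of_jump[where a = "K * real i"])
    show "x - real k * t / 2 < K * real i" and "K * real i \<le> x + real k * t / 2"
      and "-1 \<le> x - real k * t / 2" and "x + real k * t / 2 \<le> 1"
      using i(2,3) x K kt by linarith+
  next
    fix y assume "K * real i \<le> y" and "y \<le> x + real k * t / 2"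
    then have "y \<in> Jint k \<delta> i"
      using i(3) kt unfolding Jint_eq by auto
    then show "fdelta k \<delta> y = (-1) ^ i"
      using fdelta_eq_on_Jint[OF block_length_pos i(1)] by blast
  next
    fix y assume y: "x - real k * t / 2 \<le> y" "y < K * real i"
    show "fdelta k \<delta> y = 0"
    proof (rule fdelta_eq_0)
      fix j
      show "y \<notin> Jint k \<delta> j"
      proof (cases "i \<le> j")
        case True
        then have "K * real i \<le> K * real j"
          using K by (intro mult_left_mono) auto
        then show ?thesis
          using y unfolding Jint_eq by auto
      next
        case False
        then have "K * (real j + 1) \<le> K * real i"
          using K by (intro mult_left_mono) auto
        then show ?thesis
          using y i(2) kt unfolding Jint_eq by (auto simp: algebra_simps)
      qed
    qed
  qed
  then show ?thesis
    by simp
qed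

lemma Lnorm_weighted_fdelta_ge:
  "ennreal (const_Lnorm p (exp (-2 * (\<bar>\<alpha>\<bar> + \<bar>\<beta>\<bar>))) (1/16))
     \<le> Lnorm {-1..1} p (\<lambda>x. wab \<alpha> \<beta> x * fdelta k \<delta> x)"
proof (rule Lnorm_ge_const_Lnorm[OF _ _ _ Jheads_in_sets _ emeasure_Jheads_ge])
  show "Jheads k \<delta> \<subseteq> {-1..1}"
    using Jheads_subset by auto
  fix x assume "x \<in> Jheads k \<delta>"
  then show "exp (-2 * (\<bar>\<alpha>\<bar> + \<bar>\<beta>\<bar>)) \<le> \<bar>wab \<alpha> \<beta> x * fdelta k \<delta> x\<bar>"
    using wab_between_exp(1)[of x] Jheads_subset abs_fdelta_on_Jheads wab_nonneg
    by (auto simp: abs_mult)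
qed auto

lemma Lnorm_weighted_fdelta_le:
  "Lnorm {-1..1} p (\<lambda>x. wab \<alpha> \<beta> x * fdelta k \<delta> x)
     \<le> ennreal (const_Lnorm p (exp (2 * (\<bar>\<alpha>\<bar> + \<bar>\<beta>\<bar>))) 2)"
proof (rule Lnorm_le_const_Lnorm)
  have "(\<lambda>x. wab \<alpha> \<beta> x * fdelta k \<delta> x) \<in> borel_measurable borel"
    using borel_measurable_fdelta[OF block_length_pos] unfolding wab_def by measurable
  then show "(\<lambda>x. wab \<alpha> \<beta> x * fdelta k \<delta> x) \<in> borel_measurable lebesgue"
    by (simp add: measurable_completion)
  fix x
  show "\<bar>wab \<alpha> \<beta> x * fdelta k \<delta> x\<bar> \<le> exp (2 * (\<bar>\<alpha>\<bar> + \<bar>\<beta>\<bar>))"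
  proof (cases "x \<in> {0..3/4}")
    case True
    then have "wab \<alpha> \<beta> x * \<bar>fdelta k \<delta> x\<bar> \<le> exp (2 * (\<bar>\<alpha>\<bar> + \<bar>\<beta>\<bar>)) * 1"
      using wab_between_exp(2)[of x] abs_fdelta_le_indicator[of x] wab_nonneg
      by (intro mult_mono) auto
    then show ?thesis
      using wab_nonneg by (simp add: abs_mult)
  next
    case False
    then show ?thesis
      using abs_fdelta_le_indicator[of x] by simp
  qed
qed auto

lemma Omega_phi_fdelta_ge:
  "ennreal (const_Lnorm q (exp (-2 * (\<bar>\<alpha>\<bar> + \<bar>\<beta>\<bar>))) (1/16))
     \<le> Omega_phi k (fdelta k \<delta>) \<delta> (wab \<alpha> \<beta>) q"
proof -
  define h where "h = \<delta> / 2"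
  define S where "S = {-1 + 2 * (real k)\<^sup>2 * h\<^sup>2 .. 1 - 2 * (real k)\<^sup>2 * h\<^sup>2}"
  have "2 * (real k)\<^sup>2 * h\<^sup>2 = (real k * \<delta>)\<^sup>2 / 2"
    by (simp add: h_def power2_eq_square)
  also have "\<dots> \<le> (1/2)\<^sup>2 / 2"
    using block_length_pos block_length_le_half by (intro divide_right_mono power_mono) auto
  finally have "2 * (real k)\<^sup>2 * h\<^sup>2 \<le> 1/8"
    by (simp add: power2_eq_square)
  then have "{0..9/16} \<subseteq> S"
    unfolding S_def by (subst atLeastatMost_subset_iff) auto
  then have "Jheads k \<delta> \<subseteq> S"
    using Jheads_subset by blast
  then have "ennreal (const_Lnorm q (exp (-2 * (\<bar>\<alpha>\<bar> + \<bar>\<beta>\<bar>))) (1/16))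
      \<le> Lnorm S q (\<lambda>x. wab \<alpha> \<beta> x * kdiff k (h * phi x) (fdelta k \<delta>) x)"
  proof (rule Lnorm_ge_const_Lnorm[OF _ _ _ Jheads_in_sets _ emeasure_Jheads_ge, rotated 3])
    fix x assume x: "x \<in> Jheads k \<delta>"
    then have "x\<^sup>2 \<le> (9/16)\<^sup>2"
      using Jheads_subset by (intro power_mono) auto
    then have "x\<^sup>2 < 3/4"
      by (simp add: power2_eq_square)
    then have "real k * \<delta> / 2 * (1/2) < real k * \<delta> / 2 * phi x"
      and "real k * \<delta> / 2 * phi x \<le> real k * \<delta> / 2 * 1"
      using phi_gt_half phi_le_1 block_length_pos by (simp_all only: mult_less_cancel_left_pos
          mult_le_cancel_left_pos half_gt_zero)
    moreover have t_eq: "real k * (h * phi x) = real k * \<delta> / 2 * phi x"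
      by (simp add: h_def)
    ultimately have "real k * \<delta> / 4 < real k * (h * phi x)" and "real k * (h * phi x) \<le> real k * \<delta> / 2"
      unfolding t_eq by linarith+
    then have "1 \<le> \<bar>kdiff k (h * phi x) (fdelta k \<delta>) x\<bar>"
      using abs_kdiff_fdelta_ge_1[OF x] by blast
    then have "wab \<alpha> \<beta> x * 1 \<le> wab \<alpha> \<beta> x * \<bar>kdiff k (h * phi x) (fdelta k \<delta>) x\<bar>"
      using wab_nonneg by (rule mult_left_mono)
    then have "wab \<alpha> \<beta> x \<le> \<bar>wab \<alpha> \<beta> x * kdiff k (h * phi x) (fdelta k \<delta>) x\<bar>"
      using wab_nonneg by (simp add: abs_mult)
    moreover have "exp (-2 * (\<bar>\<alpha>\<bar> + \<bar>\<beta>\<bar>)) \<le> wab \<alpha> \<beta> x"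
      using wab_between_exp(1)[of x] x Jheads_subset by auto
    ultimately show "exp (-2 * (\<bar>\<alpha>\<bar> + \<bar>\<beta>\<bar>)) \<le> \<bar>wab \<alpha> \<beta> x * kdiff k (h * phi x) (fdelta k \<delta>) x\<bar>"
      by simp
  qed (auto simp: S_def)
  also have "\<dots> \<le> Omega_phi k (fdelta k \<delta>) \<delta> (wab \<alpha> \<beta>) q"
    unfolding Omega_phi_def S_def using \<delta>_pos by (intro SUP_upper) (auto simp: h_def)
  finally show ?thesis .
qed

end

theorem lemma6p1:
  fixes k :: nat and \<alpha> \<beta> :: real and p q :: ennreal
  assumes "k \<ge> 1" and "0 < p" and "0 < q"
  shows "\<exists>c1 c2 c :: real. 0 < c1 \<and> 0 < c2 \<and> 0 < c \<and>
           (\<forall>\<delta>::real. 0 < \<delta> \<and> \<delta> \<le> 1 / (2 * real k) \<longrightarrow>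
              ennreal c1 \<le> Lnorm {-1..1} p (\<lambda>x. wab \<alpha> \<beta> x * fdelta k \<delta> x)
            \<and> Lnorm {-1..1} p (\<lambda>x. wab \<alpha> \<beta> x * fdelta k \<delta> x) \<le> ennreal c2
            \<and> ennreal c \<le> Omega_phi k (fdelta k \<delta>) \<delta> (wab \<alpha> \<beta>) q)"
proof -
  let ?lower = "exp (-2 * (\<bar>\<alpha>\<bar> + \<bar>\<beta>\<bar>))" and ?upper = "exp (2 * (\<bar>\<alpha>\<bar> + \<bar>\<beta>\<bar>))"
  have "0 < const_Lnorm p ?lower (1/16)" and "0 < const_Lnorm p ?upper 2"
    and "0 < const_Lnorm q ?lower (1/16)"
    by (simp_all add: const_Lnorm_pos)
  moreover have "ennreal (const_Lnorm p ?lower (1/16)) \<le> Lnorm {-1..1} p (\<lambda>x. wab \<alpha> \<beta> x * fdelta k \<delta> x)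
      \<and> Lnorm {-1..1} p (\<lambda>x. wab \<alpha> \<beta> x * fdelta k \<delta> x) \<le> ennreal (const_Lnorm p ?upper 2)
      \<and> ennreal (const_Lnorm q ?lower (1/16)) \<le> Omega_phi k (fdelta k \<delta>) \<delta> (wab \<alpha> \<beta>) q"
    if "0 < \<delta>" and "\<delta> \<le> 1 / (2 * real k)" for \<delta>
    using Lnorm_weighted_fdelta_ge[OF assms(1) that] Lnorm_weighted_fdelta_le[OF assms(1) that]
      Omega_phi_fdelta_ge[OF assms(1) that] by blast
  ultimately show ?thesis
    by blast
qed

end
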